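(* For every 3-periodic $P_1P_2P_3$ of the elliptic billiard, $$\sum_{i=1}^3\frac{1}{|P_i-f_1|}=\frac{a^2+b^2+\delta}{ab^2}=\frac{J\sqrt2\sqrt{JL+\sqrt{9-2JL}-3}}{JL-4},\qquad \delta=\sqrt{a^4-a^2b^2+b^4}.$$
   Context: The elliptic billiard is $\mathcal{E}: x^2/a^2+y^2/b^2=1$, $a>b>0$, $c=\sqrt{a^2-b^2}$, with focus $f_1=(-c,0)$. A 3-periodic is a triangle $P_1P_2P_3$ inscribed in $\mathcal{E}$ that is a closed billiard trajectory (at each vertex the normal to $\mathcal{E}$ bisects the angle between the two incident sides). $L$ is the perimeter (the same for all 3-periodics), $J$ is Joachimsthal's constant $J=\frac12\nabla f(P_i)\cdot\hat v>0$ ($f=x^2/a^2+y^2/b^2$, $\hat v$ unit direction of the trajectory at $P_i$); explicitly $J=\sqrt{2\delta-a^2-b^2}/c^2$ and $L=2(\delta+a^2+b^2)J$. *)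

theory Defs
  imports "HOL-Analysis.Analysis"
begin

type_synonym pt = "real \<times> real"

definition on_ellipse :: "real \<Rightarrow> real \<Rightarrow> pt \<Rightarrow> bool" where
  "on_ellipse a b P \<longleftrightarrow> (fst P)^2 / a^2 + (snd P)^2 / b^2 = 1"

text \<open>Gradient of f(x,y) = x^2/a^2 + y^2/b^2, a normal to the ellipse at P.\<close>
definition ell_normal :: "real \<Rightarrow> real \<Rightarrow> pt \<Rightarrow> pt" where
  "ell_normal a b P = (2 * fst P / a^2, 2 * snd P / b^2)"

definition cross2 :: "pt \<Rightarrow> pt \<Rightarrow> real" where
  "cross2 u v = fst u * snd v - snd u * fst v"

definition unitv :: "pt \<Rightarrow> pt" where
  "unitv v = (1 / norm v) *\<^sub>R v"

text \<open>Billiard reflection at vertex P with neighbours Q, R: the normal line at P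
  bisects the angle QPR, i.e. the sum of the unit vectors from P towards Q and R
  is parallel to the normal.\<close>
definition reflects_at :: "real \<Rightarrow> real \<Rightarrow> pt \<Rightarrow> pt \<Rightarrow> pt \<Rightarrow> bool" where
  "reflects_at a b Q P R \<longleftrightarrow>
     cross2 (unitv (Q - P) + unitv (R - P)) (ell_normal a b P) = 0"

definition three_periodic :: "real \<Rightarrow> real \<Rightarrow> pt \<Rightarrow> pt \<Rightarrow> pt \<Rightarrow> bool" where
  "three_periodic a b P1 P2 P3 \<longleftrightarrow>
     on_ellipse a b P1 \<and> on_ellipse a b P2 \<and> on_ellipse a b P3 \<and>
     P1 \<noteq> P2 \<and> P2 \<noteq> P3 \<and> P3 \<noteq> P1 \<and>
     reflects_at a b P3 P1 P2 \<and> reflects_at a b P1 P2 P3 \<and> reflects_at a b P2 P3 P1"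

definition perimeter :: "pt \<Rightarrow> pt \<Rightarrow> pt \<Rightarrow> real" where
  "perimeter P1 P2 P3 = dist P1 P2 + dist P2 P3 + dist P3 P1"

text \<open>Joachimsthal's constant: J = 1/2 grad f(P1) . v, v the unit direction of the
  trajectory arriving at P1 (from P3), which gives J > 0.\<close>
definition joachimsthal :: "real \<Rightarrow> real \<Rightarrow> pt \<Rightarrow> pt \<Rightarrow> real" where
  "joachimsthal a b P3 P1 = (1/2) * (ell_normal a b P1 \<bullet> unitv (P1 - P3))"

end

theory Submission
  imports Defs
begin

text \<open>In the coordinates \<open>X = x/a\<close>, \<open>Y = y/b\<close> the ellipse is the unit circle. For a chord
  \<open>PQ\<close> let \<open>g = 1 - (X X' + Y Y')\<close> (one minus the polar form of the ellipse); then
  \<open>|PQ|\<^sup>2 = g \<cdot> D\<close> with \<open>D = a\<^sup>2(1 - X X' + Y Y') + b\<^sup>2(1 + X X' - Y Y')\<close>, and the gradient of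
  \<open>f\<close> at \<open>P\<close> projects onto \<open>PQ\<close> as \<open>-2g\<close>. Hence Joachimsthal's constant is \<open>J = g/|PQ|\<close> for
  one side, and the reflection law makes this ratio the same on all three sides, so every
  side satisfies \<open>g = J\<^sup>2 D\<close> and \<open>|PQ| = J D\<close>. The relation \<open>g = k D\<close> is a symmetric bilinear
  relation between the two endpoints; three points of the circle pairwise in this relation
  force \<open>k = J\<^sup>2\<close> to be a root of \<open>k\<^sup>2(a\<^sup>2-b\<^sup>2)\<^sup>2 + 2(a\<^sup>2+b\<^sup>2)k = 3\<close>, and determine the
  elementary symmetric functions of \<open>X\<^sub>1, X\<^sub>2, X\<^sub>3\<close>. As \<open>|P\<^sub>i f\<^sub>1| = a + c X\<^sub>i\<close> and
  \<open>L = J \<Sigma> D\<close>, both claimed equalities reduce to rational identities in \<open>k\<close> modulo this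
  equation, which also gives \<open>2\<delta> = k(a\<^sup>2-b\<^sup>2)\<^sup>2 + a\<^sup>2 + b\<^sup>2\<close>.\<close>

section \<open>Chords of the ellipse in normalised coordinates\<close>

definition circle_gap :: "pt \<Rightarrow> pt \<Rightarrow> real" where
  "circle_gap Z W = 1 - Z \<bullet> W"

definition chord_factor :: "real \<Rightarrow> real \<Rightarrow> pt \<Rightarrow> pt \<Rightarrow> real" where
  "chord_factor A B Z W =
     A * (1 - fst Z * fst W + snd Z * snd W) + B * (1 + fst Z * fst W - snd Z * snd W)"

definition ell_coords :: "real \<Rightarrow> real \<Rightarrow> pt \<Rightarrow> pt" where
  "ell_coords a b P = (fst P / a, snd P / b)"

lemma on_ellipse_iff_norm_ell_coords: "on_ellipse a b P \<longleftrightarrow> norm (ell_coords a b P) = 1"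
  unfolding on_ellipse_def ell_coords_def by (simp add: norm_Pair power_divide)

lemma ell_coords_eq_iff:
  "a \<noteq> 0 \<Longrightarrow> b \<noteq> 0 \<Longrightarrow> ell_coords a b P = ell_coords a b Q \<longleftrightarrow> P = Q"
  unfolding ell_coords_def by (auto simp: prod_eq_iff)

lemma circle_gap_commute: "circle_gap Z W = circle_gap W Z"
  unfolding circle_gap_def by (simp add: inner_commute)

lemma circle_gap_unit_circle:
  assumes "norm Z = 1" "norm W = 1"
  shows "circle_gap Z W = (dist Z W)^2 / 2"
  using assms unfolding circle_gap_def dot_norm_neg[of Z W] dist_norm by (simp add: field_simps)

lemma circle_gap_pos: "norm Z = 1 \<Longrightarrow> norm W = 1 \<Longrightarrow> Z \<noteq> W \<Longrightarrow> 0 < circle_gap Z W"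
  by (simp add: circle_gap_unit_circle)

lemma ell_normal_inner_chord:
  assumes "on_ellipse a b P"
  shows "ell_normal a b P \<bullet> (Q - P) = - 2 * circle_gap (ell_coords a b P) (ell_coords a b Q)"
proof -
  obtain x y x' y' where P: "P = (x, y)" and Q: "Q = (x', y')" by (cases P, cases Q)
  have "ell_normal a b P \<bullet> (Q - P) = 2*(x*x'/a^2 + y*y'/b^2) - 2*(x^2/a^2 + y^2/b^2)"
    unfolding ell_normal_def P Q by (simp add: algebra_simps power2_eq_square diff_divide_distrib)
  also have "x^2/a^2 + y^2/b^2 = 1" using assms unfolding on_ellipse_def P by simp
  finally show ?thesis unfolding circle_gap_def ell_coords_def P Q by (simp add: power2_eq_square)
qed

lemma dist_sq_eq_circle_gap_chord_factor:
  assumes "a \<noteq> 0" "b \<noteq> 0" "on_ellipse a b P" "on_ellipse a b Q"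
  shows "(dist P Q)^2 = circle_gap (ell_coords a b P) (ell_coords a b Q)
    * chord_factor (a^2) (b^2) (ell_coords a b P) (ell_coords a b Q)"
proof -
  obtain X1 Y1 X2 Y2 where P: "ell_coords a b P = (X1, Y1)" and Q: "ell_coords a b Q = (X2, Y2)"
    by (meson surj_pair)
  have circle: "X1^2 + Y1^2 = 1" "X2^2 + Y2^2 = 1"
    using assms(3,4) P Q unfolding on_ellipse_iff_norm_ell_coords by (simp_all add: norm_Pair)
  have "P = (a*X1, b*Y1)" "Q = (a*X2, b*Y2)"
    using P Q assms(1,2) unfolding ell_coords_def by auto
  then have "(dist P Q)^2 = a^2*(X1 - X2)^2 + b^2*(Y1 - Y2)^2"
    by (simp add: dist_Pair_Pair dist_real_def) (simp add: power2_eq_square algebra_simps)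
  also have "(X1 - X2)^2 = (1 - X1*X2 - Y1*Y2)*(1 - X1*X2 + Y1*Y2)"
  proof -
    have "(1 - X1*X2 - Y1*Y2)*(1 - X1*X2 + Y1*Y2) = (1 - X1*X2)^2 - Y1^2*Y2^2"
      by (simp add: algebra_simps power2_eq_square)
    also have "\<dots> = (1 - X1*X2)^2 - (1 - X1^2)*(1 - X2^2)" using circle by (smt (verit))
    finally show ?thesis by (simp add: algebra_simps power2_eq_square)
  qed
  also have "(Y1 - Y2)^2 = (1 - X1*X2 - Y1*Y2)*(1 + X1*X2 - Y1*Y2)"
  proof -
    have "(1 - X1*X2 - Y1*Y2)*(1 + X1*X2 - Y1*Y2) = (1 - Y1*Y2)^2 - X1^2*X2^2"
      by (simp add: algebra_simps power2_eq_square)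
    also have "\<dots> = (1 - Y1*Y2)^2 - (1 - Y1^2)*(1 - Y2^2)" using circle by (smt (verit))
    finally show ?thesis by (simp add: algebra_simps power2_eq_square)
  qed
  finally show ?thesis
    unfolding P Q circle_gap_def chord_factor_def by (simp add: algebra_simps)
qed

lemma joachimsthal_eq_gap_ratio:
  assumes "on_ellipse a b P1" "P1 \<noteq> P3"
  shows "joachimsthal a b P3 P1 = circle_gap (ell_coords a b P1) (ell_coords a b P3) / dist P1 P3"
proof -
  have "ell_normal a b P1 \<bullet> (P1 - P3) = - (ell_normal a b P1 \<bullet> (P3 - P1))"
    by (simp add: inner_diff_right)
  then show ?thesis
    using ell_normal_inner_chord[OF assms(1), of P3]
    unfolding joachimsthal_def unitv_def by (simp add: dist_norm)
qed

lemma unit_vectors_bisected_by_normal: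
  fixes u v n :: pt
  assumes "norm u = 1" "norm v = 1" "cross2 (u + v) n = 0" "n \<bullet> (u + v) \<noteq> 0"
  shows "n \<bullet> u = n \<bullet> v"
proof -
  obtain w1 w2 z1 z2 n1 n2 where uvn: "u = (w1, w2)" "v = (z1, z2)" "n = (n1, n2)"
    by (meson surj_pair)
  define s1 where "s1 = w1 + z1"
  define s2 where "s2 = w2 + z2"
  define d1 where "d1 = w1 - z1"
  define d2 where "d2 = w2 - z2"
  have "(s1^2 + s2^2)*(n1*d1 + n2*d2)
      = (s1*n1 + s2*n2)*(s1*d1 + s2*d2) + (s1*n2 - s2*n1)*(s1*d2 - s2*d1)"
    by (simp add: algebra_simps power2_eq_square)
  moreover have "s1*d1 + s2*d2 = 0"
    using assms(1,2) unfolding uvn s1_def s2_def d1_def d2_def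
    by (simp add: norm_Pair algebra_simps power2_eq_square)
  moreover have "s1*n2 - s2*n1 = 0"
    using assms(3) unfolding uvn s1_def s2_def cross2_def by simp
  moreover have "s1 \<noteq> 0 \<or> s2 \<noteq> 0"
    using assms(4) unfolding uvn s1_def s2_def by auto
  then have "s1^2 + s2^2 \<noteq> 0" by (simp add: sum_power2_eq_zero_iff)
  ultimately have "n1*d1 + n2*d2 = 0" by auto
  then show ?thesis unfolding uvn d1_def d2_def by (simp add: algebra_simps)
qed

lemma circle_gap_ell_coords_pos:
  assumes "a \<noteq> 0" "b \<noteq> 0" "on_ellipse a b P" "on_ellipse a b Q" "P \<noteq> Q"
  shows "0 < circle_gap (ell_coords a b P) (ell_coords a b Q)"
  using assms by (simp add: circle_gap_pos on_ellipse_iff_norm_ell_coords ell_coords_eq_iff)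

lemma reflects_at_gap_ratio:
  assumes ab: "a \<noteq> 0" "b \<noteq> 0"
    and on: "on_ellipse a b P" "on_ellipse a b Q" "on_ellipse a b R"
    and distinct: "Q \<noteq> P" "R \<noteq> P" and reflects: "reflects_at a b Q P R"
  shows "circle_gap (ell_coords a b P) (ell_coords a b Q) / dist P Q
       = circle_gap (ell_coords a b P) (ell_coords a b R) / dist P R"
proof -
  let ?n = "ell_normal a b P"
  let ?ratio = "\<lambda>S. circle_gap (ell_coords a b P) (ell_coords a b S) / dist P S"
  have proj: "?n \<bullet> unitv (S - P) = - 2 * ?ratio S" for S
    using ell_normal_inner_chord[OF on(1), of S] unfolding unitv_def
    by (simp add: dist_norm norm_minus_commute)
  have unit: "norm (unitv (S - P)) = 1" if "S \<noteq> P" for S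
    using that unfolding unitv_def by simp
  have "0 < ?ratio S" if "on_ellipse a b S" "S \<noteq> P" for S
    using circle_gap_ell_coords_pos[OF ab on(1) that(1)] that(2) by simp
  then have "0 < ?ratio Q" "0 < ?ratio R" using on distinct by simp_all
  moreover have "?n \<bullet> (unitv (Q - P) + unitv (R - P)) = - 2 * (?ratio Q + ?ratio R)"
    unfolding inner_add_right proj by simp
  ultimately have "?n \<bullet> (unitv (Q - P) + unitv (R - P)) \<noteq> 0" by simp
  then have "?n \<bullet> unitv (Q - P) = ?n \<bullet> unitv (R - P)"
    using unit_vectors_bisected_by_normal[OF unit unit] distinct reflects
    unfolding reflects_at_def by blast
  then show ?thesis unfolding proj by simp
qed

lemma dist_left_focus:
  assumes ab: "b < a" "0 < b" and on: "on_ellipse a b P"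
  defines "c \<equiv> sqrt (a^2 - b^2)"
  shows "dist P (- c, 0) = a + c * (fst P / a)" and "0 < a + c * (fst P / a)"
proof -
  obtain x y where P: "P = (x, y)" by (cases P)
  have a_pos: "0 < a" using ab by simp
  have "b^2 < a^2" using ab by (simp add: power_strict_mono)
  then have c_sq: "c^2 = a^2 - b^2" and c_nonneg: "0 \<le> c" unfolding c_def by simp_all
  have "c^2 < a^2" using c_sq ab by simp
  then have "c < a" using a_pos by (simp add: power_less_imp_less_base)
  have ell: "x^2/a^2 + y^2/b^2 = 1" using on unfolding on_ellipse_def P by simp
  then have "(x/a)^2 \<le> 1" by (smt (verit) power_divide zero_le_divide_iff zero_le_power2)
  then have "- 1 \<le> x/a" by (simp add: abs_square_le_1 abs_le_iff del: abs_divide)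
  then have "c * (- 1) \<le> c * (x/a)" using c_nonneg by (rule mult_left_mono)
  then show pos: "0 < a + c * (fst P / a)" using \<open>c < a\<close> unfolding P by simp
  have "(dist P (- c, 0))^2 = (x + c)^2 + y^2"
    unfolding P dist_Pair_Pair dist_real_def by simp
  also have "y^2 = b^2*(1 - x^2/a^2)" using ell ab by (simp add: field_simps)
  finally have "(dist P (- c, 0))^2 - (a + c*(x/a))^2 = (c^2 + b^2 - a^2)*(1 - x^2/a^2)"
    using a_pos by (simp add: field_simps power2_eq_square)
  then have "(dist P (- c, 0))^2 = (a + c * (fst P / a))^2" using c_sq unfolding P by simp
  then show "dist P (- c, 0) = a + c * (fst P / a)"
    using pos by (simp add: power2_eq_iff_nonneg)
qed

lemma gap_and_length_from_ratio:
  fixes u d D J :: real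
  assumes "0 < u" "0 < d" "d^2 = u * D" "u / d = J"
  shows "u = J^2 * D" and "d = J * D"
proof -
  have u: "u = J * d" using assms(2,4) by auto
  then have "u * u = u * (J^2 * D)" using assms(3) by (simp add: power2_eq_square algebra_simps)
  then show u_eq: "u = J^2 * D" using assms(1) by simp
  have "J \<noteq> 0" using u assms(1) by auto
  then show "d = J * D" using u u_eq by (simp add: power2_eq_square)
qed

definition chord_law :: "real \<Rightarrow> real \<Rightarrow> real \<Rightarrow> pt \<Rightarrow> pt \<Rightarrow> bool" where
  "chord_law a b J P Q \<longleftrightarrow>
     circle_gap (ell_coords a b P) (ell_coords a b Q)
       = J^2 * chord_factor (a^2) (b^2) (ell_coords a b P) (ell_coords a b Q)
     \<and> dist P Q = J * chord_factor (a^2) (b^2) (ell_coords a b P) (ell_coords a b Q)"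

lemma chord_law_of_gap_ratio:
  assumes ab: "a \<noteq> 0" "b \<noteq> 0" and on: "on_ellipse a b P" "on_ellipse a b Q" and "P \<noteq> Q"
    and "circle_gap (ell_coords a b P) (ell_coords a b Q) / dist P Q = J"
  shows "chord_law a b J P Q"
  using gap_and_length_from_ratio[OF circle_gap_ell_coords_pos[OF assms(1-5)] _
      dist_sq_eq_circle_gap_chord_factor[OF ab on] assms(6)] \<open>P \<noteq> Q\<close>
  unfolding chord_law_def by simp

text \<open>Joachimsthal's constant is the common value of \<open>circle_gap / length\<close> on all three
  sides: at \<open>P\<^sub>1\<close> by definition and by the reflection law, at \<open>P\<^sub>2\<close> by the reflection law.\<close>
lemma three_periodic_chord_laws:
  assumes ab: "0 < a" "0 < b" and periodic: "three_periodic a b P1 P2 P3"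
  defines "J \<equiv> joachimsthal a b P3 P1"
  shows "0 < J" and "chord_law a b J P1 P2" "chord_law a b J P2 P3" "chord_law a b J P1 P3"
proof -
  have ab': "a \<noteq> 0" "b \<noteq> 0" using ab by simp_all
  have on: "on_ellipse a b P1" "on_ellipse a b P2" "on_ellipse a b P3"
    and distinct: "P1 \<noteq> P2" "P2 \<noteq> P3" "P3 \<noteq> P1"
    and reflects: "reflects_at a b P3 P1 P2" "reflects_at a b P1 P2 P3"
    using periodic unfolding three_periodic_def by auto
  let ?ratio = "\<lambda>P Q. circle_gap (ell_coords a b P) (ell_coords a b Q) / dist P Q"
  have ratio13: "?ratio P1 P3 = J"
    unfolding J_def using joachimsthal_eq_gap_ratio on(1) distinct(3) by simp
  have ratio12: "?ratio P1 P2 = J"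
    using reflects_at_gap_ratio[OF ab' on(1,3,2) distinct(3) distinct(1)[symmetric] reflects(1)]
      ratio13 by simp
  have ratio23: "?ratio P2 P3 = J"
    using reflects_at_gap_ratio[OF ab' on(2,1,3) distinct(1) distinct(2)[symmetric] reflects(2)]
      ratio12 by (simp add: circle_gap_commute dist_commute)
  show "0 < J"
    using ratio13 circle_gap_ell_coords_pos[OF ab' on(1,3) distinct(3)[symmetric]] distinct(3)
    by auto
  show "chord_law a b J P1 P2" "chord_law a b J P2 P3" "chord_law a b J P1 P3"
    using chord_law_of_gap_ratio[OF ab' on(1,2) distinct(1) ratio12]
      chord_law_of_gap_ratio[OF ab' on(2,3) distinct(2) ratio23]
      chord_law_of_gap_ratio[OF ab' on(1,3) distinct(3)[symmetric] ratio13] .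
qed

section \<open>Three pairwise conjugate points on the unit circle\<close>

lemma unit_circle_chord_sum:
  fixes n1 n2 r X2 Y2 X3 Y3 :: real
  assumes circle: "X2^2 + Y2^2 = 1" "X3^2 + Y3^2 = 1"
    and line: "n1*X2 + n2*Y2 = r" "n1*X3 + n2*Y3 = r"
    and distinct: "(X2, Y2) \<noteq> (X3, Y3)"
  shows "(n1^2 + n2^2)*(X2 + X3) = 2*r*n1" "(n1^2 + n2^2)*(Y2 + Y3) = 2*r*n2"
proof -
  define d1 where "d1 = X2 - X3"
  define d2 where "d2 = Y2 - Y3"
  define S1 where "S1 = X2 + X3"
  define S2 where "S2 = Y2 + Y3"
  have nd: "n1*d1 + n2*d2 = 0" using line unfolding d1_def d2_def by (simp add: algebra_simps)
  have sd: "S1*d1 + S2*d2 = 0" using circle unfolding d1_def d2_def S1_def S2_def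
    by (simp add: algebra_simps power2_eq_square)
  have "d1 \<noteq> 0 \<or> d2 \<noteq> 0" using distinct unfolding d1_def d2_def by auto
  moreover have "d1*(S1*n2 - S2*n1) = n2*(S1*d1 + S2*d2) - S2*(n1*d1 + n2*d2)"
    and "d2*(S1*n2 - S2*n1) = S1*(n1*d1 + n2*d2) - n1*(S1*d1 + S2*d2)"
    by (simp_all add: algebra_simps)
  ultimately have parallel: "S1*n2 - S2*n1 = 0" using nd sd by auto
  have sn: "S1*n1 + S2*n2 = 2*r" using line unfolding S1_def S2_def by (simp add: algebra_simps)
  have "(n1^2 + n2^2)*S1 = (S1*n1 + S2*n2)*n1 + n2*(S1*n2 - S2*n1)"
    and "(n1^2 + n2^2)*S2 = (S1*n1 + S2*n2)*n2 - n1*(S1*n2 - S2*n1)"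
    by (simp_all add: algebra_simps power2_eq_square)
  then show "(n1^2 + n2^2)*(X2 + X3) = 2*r*n1" "(n1^2 + n2^2)*(Y2 + Y3) = 2*r*n2"
    using parallel sn unfolding S1_def S2_def by simp_all
qed

lemma unit_circle_chord_products:
  fixes n1 n2 r X2 Y2 X3 Y3 :: real
  assumes circle: "X2^2 + Y2^2 = 1" "X3^2 + Y3^2 = 1"
    and line: "n1*X2 + n2*Y2 = r" "n1*X3 + n2*Y3 = r"
    and distinct: "(X2, Y2) \<noteq> (X3, Y3)" and nonzero: "n1^2 + n2^2 \<noteq> 0"
  shows "(n1^2 + n2^2)*(X2*X3) = r^2 - n2^2" "(n1^2 + n2^2)*(Y2*Y3) = r^2 - n1^2"
proof -
  define N where "N = n1^2 + n2^2"
  define d1 where "d1 = X2 - X3"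
  define d2 where "d2 = Y2 - Y3"
  define S1 where "S1 = X2 + X3"
  define S2 where "S2 = Y2 + Y3"
  have hS: "N*S1 = 2*r*n1" "N*S2 = 2*r*n2"
    using unit_circle_chord_sum[OF circle line distinct] unfolding N_def S1_def S2_def .
  have N_nonzero: "N \<noteq> 0" using nonzero unfolding N_def .
  have "N*(N*(S1^2 + S2^2)) = (N*S1)^2 + (N*S2)^2" by (simp add: algebra_simps power2_eq_square)
  also have "\<dots> = 4*r^2*N" using hS unfolding N_def by (simp add: algebra_simps power2_eq_square)
  finally have SS: "N*(S1^2 + S2^2) = 4*r^2" using N_nonzero by (simp add: mult.commute)
  have DD: "d1^2 + d2^2 = 4 - (S1^2 + S2^2)" using circle unfolding d1_def d2_def S1_def S2_def
    by (simp add: algebra_simps power2_eq_square)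
  have "n1*d1 + n2*d2 = 0" using line unfolding d1_def d2_def by (simp add: algebra_simps)
  moreover have "N*d1^2 - n2^2*(d1^2 + d2^2) = (n1*d1 - n2*d2)*(n1*d1 + n2*d2)"
    and "N*d2^2 - n1^2*(d1^2 + d2^2) = (n2*d2 - n1*d1)*(n1*d1 + n2*d2)"
    unfolding N_def by (simp_all add: algebra_simps power2_eq_square)
  ultimately have Nd1: "N*d1^2 = n2^2*(d1^2 + d2^2)" and Nd2: "N*d2^2 = n1^2*(d1^2 + d2^2)"
    by simp_all
  have x23: "4*(X2*X3) = S1^2 - d1^2" and y23: "4*(Y2*Y3) = S2^2 - d2^2"
    unfolding S1_def d1_def S2_def d2_def by (simp_all add: algebra_simps power2_eq_square)
  have "N*(N*(4*(X2*X3))) = (N*S1)^2 - N*(N*d1^2)"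
    unfolding x23 by (simp add: algebra_simps power2_eq_square)
  also have "\<dots> = (N*S1)^2 - N*n2^2*(4 - (S1^2 + S2^2))" using Nd1 DD by simp
  also have "\<dots> = (N*S1)^2 - n2^2*(4*N - N*(S1^2 + S2^2))" by (simp add: algebra_simps)
  also have "\<dots> = N*(4*(r^2 - n2^2))"
    unfolding SS hS unfolding N_def by (simp add: algebra_simps power2_eq_square)
  finally have "N*(4*(X2*X3)) = 4*(r^2 - n2^2)" using N_nonzero by simp
  then show "(n1^2 + n2^2)*(X2*X3) = r^2 - n2^2" unfolding N_def by simp
  have "N*(N*(4*(Y2*Y3))) = (N*S2)^2 - N*(N*d2^2)"
    unfolding y23 by (simp add: algebra_simps power2_eq_square)
  also have "\<dots> = (N*S2)^2 - N*n1^2*(4 - (S1^2 + S2^2))" using Nd2 DD by simp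
  also have "\<dots> = (N*S2)^2 - n1^2*(4*N - N*(S1^2 + S2^2))" by (simp add: algebra_simps)
  also have "\<dots> = N*(4*(r^2 - n1^2))"
    unfolding SS hS unfolding N_def by (simp add: algebra_simps power2_eq_square)
  finally have "N*(4*(Y2*Y3)) = 4*(r^2 - n1^2)" using N_nonzero by simp
  then show "(n1^2 + n2^2)*(Y2*Y3) = r^2 - n1^2" unfolding N_def by simp
qed

lemma circle_gap_eq_factor_iff:
  "circle_gap (X, Y) (X', Y') = k * chord_factor A B (X, Y) (X', Y') \<longleftrightarrow>
     (1 - k*(A - B)) * (X*X') + (1 + k*(A - B)) * (Y*Y') = 1 - k*(A + B)"
  unfolding circle_gap_def chord_factor_def by (simp add: ring_distribs) argo

locale conjugate_triangle =
  fixes A B k X1 Y1 X2 Y2 X3 Y3 :: real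
  assumes B_less_A: "B < A" and B_pos: "0 < B" and k_pos: "0 < k"
    and on_circle: "X1^2 + Y1^2 = 1" "X2^2 + Y2^2 = 1" "X3^2 + Y3^2 = 1"
    and distinct23: "(X2, Y2) \<noteq> (X3, Y3)"
    and conjugate12: "circle_gap (X1, Y1) (X2, Y2) = k * chord_factor A B (X1, Y1) (X2, Y2)"
    and conjugate13: "circle_gap (X1, Y1) (X3, Y3) = k * chord_factor A B (X1, Y1) (X3, Y3)"
    and conjugate23: "circle_gap (X2, Y2) (X3, Y3) = k * chord_factor A B (X2, Y2) (X3, Y3)"
begin

definition p :: real where "p = 1 - k*(A - B)"
definition q :: real where "q = 1 + k*(A - B)"
definition r :: real where "r = 1 - k*(A + B)"

lemma bilinear:
  "p*(X1*X2) + q*(Y1*Y2) = r" "p*(X1*X3) + q*(Y1*Y3) = r" "p*(X2*X3) + q*(Y2*Y3) = r"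
  using conjugate12 conjugate13 conjugate23
  unfolding circle_gap_eq_factor_iff p_def q_def r_def by simp_all

lemma q_pos: "0 < q"
  unfolding q_def using B_less_A k_pos by (simp add: add_pos_pos)

definition N :: real where "N = (p*X1)^2 + (q*Y1)^2"

lemma N_nonzero: "N \<noteq> 0"
proof
  assume N0: "N = 0"
  then have "(q*Y1)^2 = 0" "(p*X1)^2 = 0" unfolding N_def by (smt (verit) zero_le_power2)+
  with q_pos on_circle(1) have "Y1 = 0" "p = 0" by (auto simp: power_mult_distrib)
  with bilinear(1) have "r = 0" by simp
  moreover have "r = - 2*k*B" using \<open>p = 0\<close> unfolding p_def r_def by (simp add: algebra_simps)
  ultimately show False using k_pos B_pos by simp
qed

text \<open>\<open>(X\<^sub>2, Y\<^sub>2)\<close> and \<open>(X\<^sub>3, Y\<^sub>3)\<close> are the two points where the line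
  \<open>p X\<^sub>1 x + q Y\<^sub>1 y = r\<close> meets the circle.\<close>
lemma vieta23:
  "N*(X2 + X3) = 2*r*(p*X1)" "N*(X2*X3) = r^2 - (q*Y1)^2" "N*(Y2*Y3) = r^2 - (p*X1)^2"
proof -
  have "(p*X1)*X2 + (q*Y1)*Y2 = r" "(p*X1)*X3 + (q*Y1)*Y3 = r"
    using bilinear(1,2) by (simp_all add: mult.assoc)
  from unit_circle_chord_sum(1)[OF on_circle(2,3) this distinct23]
    unit_circle_chord_products[OF on_circle(2,3) this distinct23] N_nonzero
  show "N*(X2 + X3) = 2*r*(p*X1)" "N*(X2*X3) = r^2 - (q*Y1)^2" "N*(Y2*Y3) = r^2 - (p*X1)^2"
    unfolding N_def by simp_all
qed

lemma Y1_sq: "Y1^2 = 1 - X1^2"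
  using on_circle(1) by simp

lemma k_quadratic: "k^2*(A - B)^2 + 2*(A + B)*k - 3 = 0"
proof -
  have "p*(N*(X2*X3)) + q*(N*(Y2*Y3)) = N*(p*(X2*X3) + q*(Y2*Y3))"
    by (simp add: algebra_simps)
  then have "p*(N*(X2*X3)) + q*(N*(Y2*Y3)) = r*N" using bilinear(3) by simp
  then have "p*(r^2 - (q*Y1)^2) + q*(r^2 - (p*X1)^2) - r*N = 0" using vieta23 by simp
  moreover have "p*(r^2 - (q*Y1)^2) + q*(r^2 - (p*X1)^2) - r*N
      = 2*k*(k^2*(A - B)^2 + 2*(A + B)*k - 3)*(A - (A - B)*X1^2)"
    unfolding N_def power_mult_distrib Y1_sq p_def q_def r_def
    by (simp add: algebra_simps power2_eq_square power3_eq_cube)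
  moreover have "X1^2 \<le> 1" using on_circle(1) by (smt (verit) zero_le_power2)
  then have "(A - B)*X1^2 \<le> (A - B)*1" using B_less_A by (intro mult_left_mono) auto
  then have "A - (A - B)*X1^2 > 0" using B_pos by simp
  ultimately show ?thesis using k_pos by simp
qed

lemma pqr_relation: "(r^2 - q^2)*(p^2 - q^2) = q^2*(q^2 + 2*r*p)"
proof -
  have "(r^2 - q^2)*(p^2 - q^2) - q^2*(q^2 + 2*r*p) = (k^2*(A - B)^2 + 2*(A + B)*k - 3) *
     (1 - 2*B*k + B^2*k^2 + 2*A*k + 2*A*B*k^2 - 3*A^2*k^2)"
    unfolding p_def q_def r_def by (simp add: algebra_simps power2_eq_square)
  then show ?thesis using k_quadratic by simp
qed

lemma N_eq: "N = p^2*X1^2 + q^2*(1 - X1^2)"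
  unfolding N_def Y1_sq[symmetric] by (simp add: power_mult_distrib)

definition e1 :: real where "e1 = X1 + X2 + X3"
definition e2 :: real where "e2 = X1*X2 + X1*X3 + X2*X3"
definition e3 :: real where "e3 = X1*X2*X3"

lemma e2_eq: "q^2*e2 = r^2 - q^2"
proof -
  have "N*(q^2*(X1*X2 + X1*X3 + X2*X3)) = q^2*(X1*(N*(X2 + X3)) + N*(X2*X3))"
    by (simp add: algebra_simps)
  also have "\<dots> = q^2*(X1*(2*r*(p*X1)) + r^2 - q^2*(1 - X1^2))"
    using vieta23(1,2) Y1_sq by (simp add: power_mult_distrib)
  also have "\<dots> = N*(r^2 - q^2) - X1^2*((r^2 - q^2)*(p^2 - q^2) - q^2*(q^2 + 2*r*p))"
    unfolding N_eq by (simp add: algebra_simps power2_eq_square)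
  finally show ?thesis unfolding e2_def using pqr_relation N_nonzero by simp
qed

lemma e3_eq: "(p^2 - q^2)*e3 = q^2*e1"
proof -
  have "N*((p^2 - q^2)*(X1*X2*X3)) = (p^2 - q^2)*X1*(N*(X2*X3))" by (simp add: algebra_simps)
  also have "\<dots> = (p^2 - q^2)*X1*(r^2 - q^2*(1 - X1^2))"
    using vieta23(2) Y1_sq by (simp add: power_mult_distrib)
  also have "\<dots> = N*(q^2*(X1 + X2 + X3)) + X1*((r^2 - q^2)*(p^2 - q^2) - q^2*(q^2 + 2*r*p))
        - q^2*(X1*N + N*(X2 + X3) - X1*(N + 2*r*p))"
    unfolding N_eq by (simp add: algebra_simps power2_eq_square)
  also have "\<dots> = N*(q^2*(X1 + X2 + X3))" using pqr_relation vieta23(1) by (simp add: algebra_simps)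
  finally show ?thesis unfolding e1_def e3_def using N_nonzero by simp
qed

lemma e2_minus_Y_sum: "e2 - (Y1*Y2 + Y1*Y3 + Y2*Y3) = - k*(A - B)"
proof -
  have Y_pair_sum: "q*(Y1*Y2 + Y1*Y3 + Y2*Y3) = 3*r - p*(X1*X2 + X1*X3 + X2*X3)"
    using bilinear by (simp add: algebra_simps)
  have "3*r*q^2 - 2*(r^2 - q^2) - k*(A - B)*q^3 = (k^2*(A - B)^2 + 2*(A + B)*k - 3) *
      (-1 + 2*B*k - B^2*k^2 - 4*A*k + 2*A*B*k^2 - A^2*k^2)"
    unfolding q_def r_def by (simp add: algebra_simps power2_eq_square power3_eq_cube)
  then have cubic: "3*r*q^2 - 2*(r^2 - q^2) - k*(A - B)*q^3 = 0" using k_quadratic by simp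
  have "q^3*((X1*X2 + X1*X3 + X2*X3) - (Y1*Y2 + Y1*Y3 + Y2*Y3))
      = q^2*(q*(X1*X2 + X1*X3 + X2*X3)) - q^2*(q*(Y1*Y2 + Y1*Y3 + Y2*Y3))"
    by (simp add: algebra_simps power2_eq_square power3_eq_cube)
  also have "\<dots> = (q + p)*(q^2*(X1*X2 + X1*X3 + X2*X3)) - q^2*(3*r)"
    unfolding Y_pair_sum by (simp add: algebra_simps)
  also have "\<dots> = q^3*(- k*(A - B))"
    using e2_eq cubic unfolding e2_def p_def q_def by (simp add: algebra_simps)
  finally have "q^3*((X1*X2 + X1*X3 + X2*X3) - (Y1*Y2 + Y1*Y3 + Y2*Y3)) = q^3*(- k*(A - B))" .
  moreover have "q^3 \<noteq> 0" using q_pos by simp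
  ultimately show ?thesis unfolding e2_def by (metis mult_left_cancel)
qed

lemma chord_factor_sum:
  "chord_factor A B (X1, Y1) (X2, Y2) + chord_factor A B (X2, Y2) (X3, Y3)
     + chord_factor A B (X1, Y1) (X3, Y3) = 3*(A + B) + k*(A - B)^2"
proof -
  have "chord_factor A B (X1, Y1) (X2, Y2) + chord_factor A B (X2, Y2) (X3, Y3)
      + chord_factor A B (X1, Y1) (X3, Y3)
      = 3*(A + B) - (A - B)*((X1*X2 + X1*X3 + X2*X3) - (Y1*Y2 + Y1*Y3 + Y2*Y3))"
    unfolding chord_factor_def by (simp add: algebra_simps)
  then show ?thesis using e2_minus_Y_sum unfolding e2_def by (simp add: power2_eq_square)
qed

lemma focal_symmetric_identity:
  assumes a_sq: "A = a^2" and d: "2*d = k*(A - B)^2 + A + B"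
  shows "a*B*(3*A + 2*a*c*e1 + (A - B)*e2)
    = (A + B + d)*(a*A + A*c*e1 + a*(A - B)*e2 + c*(A - B)*e3)"
proof -
  have d': "3*(A + B) + k*(A - B)^2 = 2*(A + B + d)" using d by simp
  have "p^2 - q^2 = -4*k*(A - B)" unfolding p_def q_def by (simp add: algebra_simps power2_eq_square)
  then have e3_eq': "4*k*(A - B)*e3 = -(q^2*e1)" using e3_eq by simp
  have "16*k*A*B - (3*(A + B) + k*(A - B)^2)*(4*k*A - q^2) = (k^2*(A - B)^2 + 2*(A + B)*k - 3) *
     (-B + B^2*k - A - 2*A*B*k + A^2*k)"
    unfolding q_def by (simp add: algebra_simps power2_eq_square)
  then have "16*k*A*B = 2*((A + B + d)*(4*k*A - q^2))" unfolding d' using k_quadratic by simp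
  then have i: "8*k*A*B = (A + B + d)*(4*k*A - q^2)" by (simp add: mult_ac)
  have "(3*A*q^2 + (A - B)*(r^2 - q^2))*(2*B)
      - (3*(A + B) + k*(A - B)^2)*(A*q^2 + (A - B)*(r^2 - q^2))
      = (k^2*(A - B)^2 + 2*(A + B)*k - 3) * (-A*B + 3*A*B^2*k + A^2 - 2*A^2*B*k - A^3*k)"
    unfolding q_def r_def by (simp add: algebra_simps power2_eq_square power3_eq_cube)
  then have "(3*A*q^2 + (A - B)*(r^2 - q^2))*(2*B)
      = 2*(A + B + d)*(A*q^2 + (A - B)*(r^2 - q^2))"
    unfolding d' using k_quadratic by simp
  then have "2*(B*(3*A*q^2 + (A - B)*(r^2 - q^2)))
      = 2*((A + B + d)*(A*q^2 + (A - B)*(r^2 - q^2)))"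
    by (simp only: mult_ac)
  then have ii: "B*(3*A*q^2 + (A - B)*(r^2 - q^2)) = (A + B + d)*(A*q^2 + (A - B)*(r^2 - q^2))"
    by simp
  have "4*k*q^2*(a*B*(3*A + 2*a*c*e1 + (A - B)*e2))
      = c*q^2*e1*(8*k*A*B) + 4*k*a*(B*(3*A*q^2 + (A - B)*(q^2*e2)))"
    unfolding a_sq by (simp add: algebra_simps power2_eq_square)
  also have "\<dots> = (A + B + d)*(4*k*q^2*(a*A) + A*c*e1*(4*k*q^2) + a*(A - B)*(4*k*(q^2*e2))
      + c*q^2*(-(q^2*e1)))"
    unfolding i e2_eq ii unfolding e2_eq[symmetric] by (simp add: algebra_simps)
  also have "\<dots> = 4*k*q^2*((A + B + d)*(a*A + A*c*e1 + a*(A - B)*e2 + c*(A - B)*e3))"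
    unfolding e3_eq'[symmetric] by (simp add: algebra_simps)
  finally show ?thesis using k_pos q_pos by simp
qed

lemma focal_reciprocal_sum:
  assumes a_pos: "0 < a" and a_sq: "A = a^2" and c_sq: "c^2 = A - B"
    and d: "2*d = k*(A - B)^2 + A + B"
    and nonzero: "a + c*X1 \<noteq> 0" "a + c*X2 \<noteq> 0" "a + c*X3 \<noteq> 0"
  shows "1/(a + c*X1) + 1/(a + c*X2) + 1/(a + c*X3) = (A + B + d)/(a*B)"
proof -
  have num: "(a + c*X2)*(a + c*X3) + (a + c*X1)*(a + c*X3) + (a + c*X1)*(a + c*X2)
      = 3*A + 2*a*c*e1 + (A - B)*e2"
    unfolding e1_def e2_def c_sq[symmetric] unfolding a_sq
    by (simp add: algebra_simps power2_eq_square)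
  have den: "(a + c*X1)*(a + c*X2)*(a + c*X3) = a*A + A*c*e1 + a*(A - B)*e2 + c*(A - B)*e3"
    unfolding e1_def e2_def e3_def c_sq[symmetric] unfolding a_sq
    by (simp add: algebra_simps power2_eq_square)
  have "a*A + A*c*e1 + a*(A - B)*e2 + c*(A - B)*e3 \<noteq> 0"
    using nonzero unfolding den[symmetric] by simp
  then have "(3*A + 2*a*c*e1 + (A - B)*e2) / (a*A + A*c*e1 + a*(A - B)*e2 + c*(A - B)*e3)
      = (A + B + d)/(a*B)"
    using focal_symmetric_identity[OF a_sq d, of c] a_pos B_pos by (simp add: frac_eq_eq mult.commute)
  moreover have "1/(a + c*X1) + 1/(a + c*X2) + 1/(a + c*X3)
      = (3*A + 2*a*c*e1 + (A - B)*e2) / (a*A + A*c*e1 + a*(A - B)*e2 + c*(A - B)*e3)"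
    unfolding num[symmetric] den[symmetric] using nonzero
    by (simp add: add_frac_eq) (simp add: algebra_simps)
  ultimately show ?thesis by simp
qed

end

lemma delta_from_k_quadratic:
  fixes A B k :: real
  assumes "0 \<le> A" "0 \<le> B" "0 \<le> k" and k_quadratic: "k^2*(A - B)^2 + 2*(A + B)*k - 3 = 0"
  shows "2 * sqrt (A^2 - A*B + B^2) = k*(A - B)^2 + A + B"
proof -
  have "A^2 - A*B + B^2 = (A - B)^2 + A*B" by (simp add: algebra_simps power2_eq_square)
  then have nonneg: "0 \<le> A^2 - A*B + B^2" using assms(1,2) by (simp only:) simp
  have "(k*(A - B)^2 + A + B)^2
      = 4*(A^2 - A*B + B^2) + (A - B)^2*(k^2*(A - B)^2 + 2*(A + B)*k - 3)"
    by (simp add: algebra_simps power2_eq_square)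
  also have "\<dots> = (2 * sqrt (A^2 - A*B + B^2))^2"
    using nonneg k_quadratic by (simp add: power_mult_distrib)
  finally have "(k*(A - B)^2 + A + B)^2 = (2 * sqrt (A^2 - A*B + B^2))^2" .
  moreover have "0 \<le> k*(A - B)^2 + A + B" using assms(1-3) by simp
  ultimately show ?thesis using power2_eq_iff_nonneg nonneg by (metis real_sqrt_ge_zero zero_le_mult_iff zero_le_numeral)
qed

lemma joachimsthal_perimeter_identity:
  fixes a b J L d :: real
  assumes ab: "b < a" "0 < b" and J_pos: "0 < J"
    and J_equation: "(J^2)^2*(a^2 - b^2)^2 + 2*(a^2 + b^2)*J^2 - 3 = 0"
    and d: "2*d = J^2*(a^2 - b^2)^2 + a^2 + b^2"
    and L: "L = 2*J*(a^2 + b^2 + d)"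
  shows "(a^2 + b^2 + d) / (a * b^2)
    = J * sqrt 2 * sqrt (J * L + sqrt (9 - 2 * J * L) - 3) / (J * L - 4)"
proof -
  define A where "A = a^2"
  define B where "B = b^2"
  define k where "k = J^2"
  have k_pos: "0 < k" unfolding k_def using J_pos by simp
  have "B < A" "0 < B" unfolding A_def B_def using ab by (simp_all add: power_strict_mono)
  have k_quadratic: "k^2*(A - B)^2 + 2*(A + B)*k - 3 = 0" using J_equation unfolding k_def A_def B_def .
  have d': "2*(A + B + d) = k*(A - B)^2 + 3*(A + B)" using d unfolding k_def A_def B_def by simp
  have JL: "J*L = 3 + k*(A + B)"
  proof -
    have "J*L = k*(2*(A + B + d))" unfolding L k_def A_def B_def by (simp add: algebra_simps power2_eq_square)
    also have "\<dots> = 3 + k*(A + B)" unfolding d' using k_quadratic by (simp add: algebra_simps power2_eq_square)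
    finally show ?thesis .
  qed
  have "9 - 2*J*L = (k*(A - B))^2" using JL k_quadratic by (simp add: algebra_simps power2_eq_square)
  then have "sqrt (9 - 2*J*L) = k*(A - B)" using k_pos \<open>B < A\<close> by simp
  then have "J*L + sqrt (9 - 2*J*L) - 3 = 2*k*A" unfolding JL by (simp add: algebra_simps)
  then have "sqrt 2 * sqrt (J*L + sqrt (9 - 2*J*L) - 3) = sqrt ((2*J*a)^2)"
    unfolding k_def A_def by (simp add: real_sqrt_mult[symmetric] power_mult_distrib)
  also have "\<dots> = 2*J*a" using J_pos ab by simp
  finally have "J * sqrt 2 * sqrt (J*L + sqrt (9 - 2*J*L) - 3) / (J*L - 4) = 2*k*a/(k*(A + B) - 1)"
    using JL unfolding k_def by (simp add: algebra_simps power2_eq_square)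
  moreover have key: "4*k*A*B = (k*(A + B) - 1)*(2*(A + B + d))"
  proof -
    have "(k*(A + B) - 1)*(2*(A + B + d))
        = 4*k*A*B + (A + B)*(k^2*(A - B)^2 + 2*(A + B)*k - 3)"
      unfolding d' by (simp add: algebra_simps power2_eq_square)
    then show ?thesis using k_quadratic by simp
  qed
  moreover have "k*(A + B) - 1 \<noteq> 0" using key k_pos \<open>0 < B\<close> \<open>B < A\<close> by auto
  then have "2*k*a/(k*(A + B) - 1) = (A + B + d)/(a*B)"
    using key ab \<open>0 < B\<close> unfolding A_def by (simp add: field_simps power2_eq_square)
  ultimately show ?thesis unfolding A_def B_def by simp
qed

lemma three_periodic_conjugate_triangle:
  assumes ab: "b < a" "0 < b" and periodic: "three_periodic a b P1 P2 P3"
    and coords: "ell_coords a b P1 = (X1, Y1)" "ell_coords a b P2 = (X2, Y2)"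
      "ell_coords a b P3 = (X3, Y3)"
  shows "conjugate_triangle (a^2) (b^2) ((joachimsthal a b P3 P1)^2) X1 Y1 X2 Y2 X3 Y3"
proof -
  have on: "on_ellipse a b P1" "on_ellipse a b P2" "on_ellipse a b P3" and "P2 \<noteq> P3"
    using periodic unfolding three_periodic_def by simp_all
  have "0 < a" using ab by simp
  note laws = three_periodic_chord_laws[OF this ab(2) periodic]
  show ?thesis
    using ab laws coords on \<open>P2 \<noteq> P3\<close> ell_coords_eq_iff[of a b P2 P3]
    unfolding chord_law_def
    by unfold_locales (auto simp: power_strict_mono on_ellipse_iff_norm_ell_coords norm_Pair)
qed

theorem mainTheorem11:
  fixes a b :: real and P1 P2 P3 :: "real \<times> real"
  assumes "a > b" and "b > 0"
    and "three_periodic a b P1 P2 P3"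
  defines "c \<equiv> sqrt (a^2 - b^2)"
    and "\<delta> \<equiv> sqrt (a^4 - a^2 * b^2 + b^4)"
    and "J \<equiv> joachimsthal a b P3 P1"
    and "L \<equiv> perimeter P1 P2 P3"
  shows "1 / dist P1 (-c, 0) + 1 / dist P2 (-c, 0) + 1 / dist P3 (-c, 0)
           = (a^2 + b^2 + \<delta>) / (a * b^2)
         \<and> (a^2 + b^2 + \<delta>) / (a * b^2)
           = J * sqrt 2 * sqrt (J * L + sqrt (9 - 2 * J * L) - 3) / (J * L - 4)"
proof -
  have on: "on_ellipse a b P1" "on_ellipse a b P2" "on_ellipse a b P3"
    using assms(3) unfolding three_periodic_def by simp_all
  have "0 < a" using assms(1,2) by simp
  note laws = three_periodic_chord_laws[OF this assms(2,3), folded J_def]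
  obtain X1 Y1 X2 Y2 X3 Y3 where coords: "ell_coords a b P1 = (X1, Y1)"
    "ell_coords a b P2 = (X2, Y2)" "ell_coords a b P3 = (X3, Y3)"
    by (meson surj_pair)
  interpret conjugate_triangle "a^2" "b^2" "J^2" X1 Y1 X2 Y2 X3 Y3
    using three_periodic_conjugate_triangle[OF assms(1-3) coords] unfolding J_def .
  have delta: "2*\<delta> = J^2*(a^2 - b^2)^2 + a^2 + b^2"
    using delta_from_k_quadratic[of "a^2" "b^2" "J^2"] k_quadratic
    unfolding \<delta>_def by (simp flip: power_mult)
  have "fst P1 / a = X1" "fst P2 / a = X2" "fst P3 / a = X3"
    using coords unfolding ell_coords_def by auto
  then have "1 / dist P1 (-c, 0) + 1 / dist P2 (-c, 0) + 1 / dist P3 (-c, 0)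
      = (a^2 + b^2 + \<delta>) / (a * b^2)"
    using dist_left_focus[OF assms(1,2) on(1)] dist_left_focus[OF assms(1,2) on(2)]
      dist_left_focus[OF assms(1,2) on(3)] focal_reciprocal_sum[OF _ refl _ delta, of c] assms(1,2)
    unfolding c_def by (simp add: less_imp_le power_strict_mono)
  moreover have "L = J * (chord_factor (a^2) (b^2) (X1, Y1) (X2, Y2)
      + chord_factor (a^2) (b^2) (X2, Y2) (X3, Y3) + chord_factor (a^2) (b^2) (X1, Y1) (X3, Y3))"
    using laws(2-4) coords unfolding chord_law_def L_def perimeter_def
    by (simp add: dist_commute algebra_simps)
  then have "L = 2*J*(a^2 + b^2 + \<delta>)"
    unfolding chord_factor_sum using delta by (simp add: algebra_simps)
  ultimately show ?thesis
    using joachimsthal_perimeter_identity[OF assms(1,2) laws(1) k_quadratic delta] by simp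
qed

end
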